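(* Let $v$ be a floating-point value (zero or a normal IEEE 754 double) with $\alpha = DP(v) \le 22$ and $\beta = DS(v) \le 15$. For each integer $i \ge 0$ let $\varepsilon_i = |v \otimes 10^{i} - round(v \otimes 10^{i})|$ and $\mu_i = |v \otimes 10^{i}| \times 2^{-52}$ (these two quantities being evaluated exactly on the double $v \otimes 10^i$). Then $\varepsilon_i > \mu_i$ for every $i \in \{0, 1, \dots, \alpha - 1\}$, and $\varepsilon_\alpha \le \mu_\alpha$.
   Context: Convention: a floating-point value $v$ is identified with the decimal number given by its decimal format $DF(v)$, i.e. its shortest decimal representation that reads back to $v$. For a nonzero terminating decimal $x$, $DP(x)$ is the least nonnegative integer $j$ with $x \times 10^j$ an integer, and $DS(x) = DP(x) + \lfloor \log_{10}|x|\rfloor + 1$; $DP(0)=DS(0)=0$. $v \otimes 10^{i}$ denotes the product computed in IEEE 754 double-precision arithmetic (round-to-nearest), with $10^i$ represented as a double. $round(\cdot)$ denotes rounding to the nearest integer. *)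

theory Defs
  imports Complex_Main
begin

text \<open>Normal doubles: m * 2^e with 53-bit integer significand and exponent range
  of binary64 (unbiased exponent -1022..1023, i.e. e = E - 52 in -1074..971).\<close>
definition is_normal_double :: "real \<Rightarrow> bool" where
  "is_normal_double v \<longleftrightarrow>
     (\<exists>m e :: int. v = of_int m * 2 powr (of_int e) \<and> 2^52 \<le> \<bar>m\<bar> \<and> \<bar>m\<bar> < 2^53
                   \<and> -1074 \<le> e \<and> e \<le> 971)"

definition round_even :: "real \<Rightarrow> int" where
  "round_even y =
     (if y - of_int \<lfloor>y\<rfloor> < 1/2 then \<lfloor>y\<rfloor>
      else if y - of_int \<lfloor>y\<rfloor> > 1/2 then \<lfloor>y\<rfloor> + 1
      else if even \<lfloor>y\<rfloor> then \<lfloor>y\<rfloor> else \<lfloor>y\<rfloor> + 1)"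

text \<open>IEEE 754 binary64 round-to-nearest-even of a real (normals and subnormals;
  overflow to infinity is not modelled).\<close>
definition fl :: "real \<Rightarrow> real" where
  "fl x = (if x = 0 then 0 else
     (let E = max \<lfloor>log 2 \<bar>x\<bar>\<rfloor> (-1022); u = 2 powr (of_int E - 52)
      in u * of_int (round_even (x / u))))"

definition dmul_pow10 :: "real \<Rightarrow> nat \<Rightarrow> real" where
  "dmul_pow10 v i = fl (v * fl (10 ^ i))"

definition terminating_decimal :: "real \<Rightarrow> bool" where
  "terminating_decimal x \<longleftrightarrow> (\<exists>j::nat. x * 10 ^ j \<in> \<int>)"

definition DP :: "real \<Rightarrow> nat" where
  "DP x = (LEAST j::nat. x * 10 ^ j \<in> \<int>)"

definition DS :: "real \<Rightarrow> int" where
  "DS x = (if x = 0 then 0 else int (DP x) + \<lfloor>log 10 \<bar>x\<bar>\<rfloor> + 1)"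

definition readback :: "real \<Rightarrow> real set" where
  "readback v = {x. terminating_decimal x \<and> fl x = v}"

definition DF :: "real \<Rightarrow> real" where
  "DF v = (let n = (LEAST n::int. \<exists>x\<in>readback v. DS x = n \<and> n \<ge> 0);
               C = {x \<in> readback v. DS x = n}
           in SOME x. x \<in> C \<and> (\<forall>y\<in>C. \<bar>x - v\<bar> \<le> \<bar>y - v\<bar>))"

definition eps_i :: "real \<Rightarrow> nat \<Rightarrow> real" where
  "eps_i v i = \<bar>dmul_pow10 v i - of_int (round (dmul_pow10 v i))\<bar>"

definition mu_i :: "real \<Rightarrow> nat \<Rightarrow> real" where
  "mu_i v i = \<bar>dmul_pow10 v i\<bar> * 2 powr (-52)"

end

theory Submission
  imports Defs
begin

text \<open>
  Let \<open>d = DF v\<close>, \<open>\<alpha> = DP d\<close> and \<open>k = d * 10^\<alpha>\<close>, an integer with \<open>\<bar>k\<bar> < 10^15\<close>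
  because \<open>DS d \<le> 15\<close>. As \<open>10^i\<close> is an exact double for \<open>i \<le> 22\<close> and \<open>fl d = v\<close>, the double
  \<open>v \<otimes> 10^i = fl (v * 10^i)\<close> differs from \<open>d * 10^i\<close> by two relative errors of at most \<open>2^-53\<close>.
  For \<open>i < \<alpha>\<close>, \<open>d * 10^i\<close> is a non-integer multiple of \<open>10^(i-\<alpha>)\<close>, so its distance to every
  integer is at least \<open>10^(i-\<alpha>) > 10^-15 * \<bar>d * 10^i\<bar>\<close>. This margin exceeds the two rounding
  errors plus the threshold \<open>\<mu>\<^sub>i\<close>, which together are only about \<open>4.4 * 10^-16 * \<bar>d * 10^i\<bar>\<close>.
  For \<open>i = \<alpha>\<close>, \<open>\<bar>v * 10^\<alpha>\<bar> < 2^53\<close>, so the ulp of \<open>v * 10^\<alpha>\<close> divides the integer \<open>k\<close>. The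
  rounded value is a multiple of this ulp less than one and a half ulps away from \<open>k\<close>, hence at
  most one ulp away, and one ulp is at most \<open>2^-52 * \<bar>v \<otimes> 10^\<alpha>\<bar>\<close>.
\<close>

section \<open>Rounding to binary64\<close>

text \<open>The case \<open>x = 0\<close> is separate because \<open>log 2 0 = 0\<close>; \<open>fl 0 = 0\<close> holds with any unit.\<close>
definition ulp :: "real \<Rightarrow> real" where
  "ulp x = (if x = 0 then 2 powr -1074 else 2 powr (of_int (max \<lfloor>log 2 \<bar>x\<bar>\<rfloor> (-1022)) - 52))"

lemma ulp_pos: "0 < ulp x"
  by (simp add: ulp_def)

lemma round_even_error: "\<bar>y - of_int (round_even y)\<bar> \<le> 1/2"
  unfolding round_even_def
  using of_int_floor_le[of y] real_of_int_floor_add_one_gt[of y]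
  by (auto split: if_splits)

lemma round_even_of_int [simp]: "round_even (of_int n) = n"
  by (simp add: round_even_def)

lemma fl_eq_ulp_mult: "fl x = ulp x * of_int (round_even (x / ulp x))"
  by (simp add: fl_def ulp_def Let_def round_even_def)

lemma fl_zero [simp]: "fl 0 = 0"
  by (simp add: fl_def)

lemma fl_div_ulp_Ints: "fl x / ulp x \<in> \<int>"
  using ulp_pos[of x] by (simp add: fl_eq_ulp_mult)

lemma abs_fl_minus_le: "\<bar>fl x - x\<bar> \<le> ulp x / 2"
proof -
  have "\<bar>fl x - x\<bar> = ulp x * \<bar>x / ulp x - of_int (round_even (x / ulp x))\<bar>"
    using ulp_pos[of x] by (simp add: fl_eq_ulp_mult abs_mult_pos' field_simps flip: abs_minus_commute)
  also have "\<dots> \<le> ulp x * (1/2)"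
    using ulp_pos[of x] round_even_error by (intro mult_left_mono) auto
  finally show ?thesis by simp
qed

lemma fl_eq_self:
  assumes "x / ulp x \<in> \<int>"
  shows "fl x = x"
proof -
  obtain z where "x / ulp x = of_int z"
    using assms by (elim Ints_cases)
  then have "fl x = ulp x * of_int z"
    by (simp add: fl_eq_ulp_mult)
  with \<open>x / ulp x = of_int z\<close> show ?thesis
    using ulp_pos[of x] by (simp add: field_simps)
qed

lemma ulp_subnormal:
  assumes "\<bar>x\<bar> < 2 powr -1022"
  shows "ulp x = 2 powr -1074"
proof (cases "x = 0")
  case False
  then have "log 2 \<bar>x\<bar> < -1022"
    using assms by (simp add: log_less_iff)
  then show ?thesis
    by (simp add: ulp_def max_def)
qed (simp add: ulp_def)

lemma ulp_normal:
  assumes "2 powr -1022 \<le> \<bar>x\<bar>"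
  shows "ulp x = 2 powr (\<lfloor>log 2 \<bar>x\<bar>\<rfloor> - 52)"
    and "2 powr 52 * ulp x \<le> \<bar>x\<bar>"
proof -
  define E where "E = \<lfloor>log 2 \<bar>x\<bar>\<rfloor>"
  have x: "0 < \<bar>x\<bar>"
    using assms powr_gt_zero[of 2 "-1022"] by linarith
  have "-1022 \<le> log 2 \<bar>x\<bar>"
    using assms x by (simp add: le_log_iff)
  then have "-1022 \<le> E"
    unfolding E_def by linarith
  then show ulp: "ulp x = 2 powr (E - 52)"
    using x by (simp add: ulp_def E_def)
  have "2 powr E \<le> \<bar>x\<bar>"
    using floor_log_eq_powr_iff[OF x, of 2 E] by (simp add: E_def)
  moreover have "2 powr 52 * ulp x = 2 powr E"
    unfolding ulp by (subst powr_add[symmetric]) simp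
  ultimately show "2 powr 52 * ulp x \<le> \<bar>x\<bar>"
    by simp
qed

lemma abs_less_ulp: "\<bar>x\<bar> < 2 powr 53 * ulp x"
proof (cases "2 powr -1022 \<le> \<bar>x\<bar>")
  case True
  define E where "E = \<lfloor>log 2 \<bar>x\<bar>\<rfloor>"
  have "0 < \<bar>x\<bar>"
    using True powr_gt_zero[of 2 "-1022"] by linarith
  then have "\<bar>x\<bar> < 2 powr (E + 1)"
    using floor_log_eq_powr_iff[of "\<bar>x\<bar>" 2 E] by (simp add: E_def)
  moreover have "2 powr 53 * ulp x = 2 powr (E + 1)"
    unfolding ulp_normal(1)[OF True] E_def[symmetric] by (subst powr_add[symmetric]) (simp add: ac_simps)
  ultimately show ?thesis
    by simp
next
  case False
  moreover have "2 powr 53 * ulp x = 2 powr -1021"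
    unfolding ulp_subnormal[OF False[unfolded not_le]] by (subst powr_add[symmetric]) simp
  moreover have "(2::real) powr -1022 < 2 powr -1021"
    by (rule powr_less_mono) auto
  ultimately show ?thesis
    using False by linarith
qed

lemma pow2_div_ulp_Ints:
  fixes e :: int
  assumes "\<bar>x\<bar> < 2 powr (e + 53)" and "-1074 \<le> e"
  shows "2 powr e / ulp x \<in> \<int>"
proof -
  obtain F :: int where F: "ulp x = 2 powr F" and "F \<le> e"
  proof (cases "x = 0")
    case True
    then show ?thesis
      using that[of "-1074"] assms(2) by (simp add: ulp_def)
  next
    case False
    then have "log 2 \<bar>x\<bar> < e + 53"
      using assms(1) by (simp add: log_less_iff)
    then have "max \<lfloor>log 2 \<bar>x\<bar>\<rfloor> (-1022) - 52 \<le> e"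
      using assms(2) by linarith
    then show ?thesis
      using that[of "max \<lfloor>log 2 \<bar>x\<bar>\<rfloor> (-1022) - 52"] False by (simp add: ulp_def)
  qed
  then have "2 powr e / ulp x = 2 ^ nat (e - F)"
    by (simp add: F powr_realpow[symmetric] powr_diff[symmetric])
  then show ?thesis
    by simp
qed

lemma fl_of_int_mult_pow2:
  fixes e :: int
  assumes "\<bar>m\<bar> < 2 ^ 53" and "-1074 \<le> e"
  shows "fl (of_int m * 2 powr e) = of_int m * 2 powr e"
proof (rule fl_eq_self)
  have "\<bar>of_int m :: real\<bar> < 2 powr 53"
    using assms(1) by (simp add: powr_realpow flip: of_int_abs)
  then have "\<bar>of_int m * 2 powr e\<bar> < 2 powr (e + 53)"
    by (simp add: abs_mult powr_add)
  then have "2 powr e / ulp (of_int m * 2 powr e) \<in> \<int>"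
    using assms(2) by (rule pow2_div_ulp_Ints)
  then have "of_int m * (2 powr e / ulp (of_int m * 2 powr e)) \<in> \<int>"
    by (intro Ints_mult Ints_of_int)
  then show "of_int m * 2 powr e / ulp (of_int m * 2 powr e) \<in> \<int>"
    by (simp only: times_divide_eq_right)
qed

lemma ulp_le_abs_fl:
  assumes "2 powr -1022 \<le> \<bar>x\<bar>"
  shows "2 powr 52 * ulp x \<le> \<bar>fl x\<bar>"
proof -
  define r where "r = round_even (x / ulp x)"
  have u: "0 < ulp x"
    by (rule ulp_pos)
  have "2 ^ 52 \<le> \<bar>x / ulp x\<bar>"
    using ulp_normal(2)[OF assms] u by (simp add: field_simps)
  moreover have "\<bar>x / ulp x - of_int r\<bar> \<le> 1/2"
    unfolding r_def by (rule round_even_error)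
  ultimately have "of_int (2 ^ 52 - 1) < (of_int \<bar>r\<bar> :: real)"
    using abs_triangle_ineq2[of "x / ulp x" "of_int r"] by simp
  then have "of_int (2 ^ 52) \<le> (of_int \<bar>r\<bar> :: real)"
    unfolding of_int_less_iff of_int_le_iff by linarith
  then have "(2 ^ 52 :: real) \<le> \<bar>of_int r\<bar>"
    by simp
  then show ?thesis
    using u by (simp add: fl_eq_ulp_mult r_def[symmetric] abs_mult powr_realpow mult.commute)
qed

lemma half_ulp_le:
  assumes "2 powr 52 * ulp x \<le> a"
  shows "ulp x / 2 \<le> 2 powr -53 * a"
proof -
  have "2 powr -53 * (2 powr 52 * ulp x) = ulp x / 2"
    by (simp add: powr_neg_numeral)
  with assms show ?thesis
    by (metis mult_left_mono powr_ge_zero)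
qed

lemma fl_rel_error:
  assumes "2 powr -1022 \<le> \<bar>x\<bar>"
  shows "\<bar>fl x - x\<bar> \<le> 2 powr -53 * \<bar>x\<bar>"
  using abs_fl_minus_le[of x] half_ulp_le[OF ulp_normal(2)[OF assms]] by linarith

lemma fl_rel_error_fl:
  assumes "2 powr -1022 \<le> \<bar>fl x\<bar>"
  shows "\<bar>fl x - x\<bar> \<le> 2 powr -53 * \<bar>fl x\<bar>"
proof -
  have "2 powr 52 * ulp x \<le> \<bar>fl x\<bar>"
  proof (cases "2 powr -1022 \<le> \<bar>x\<bar>")
    case True
    then show ?thesis
      by (rule ulp_le_abs_fl)
  next
    case False
    then have "2 powr 52 * ulp x = 2 powr 52 * 2 powr -1074"
      by (simp add: ulp_subnormal)
    also have "\<dots> = 2 powr -1022"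
      by (subst powr_add[symmetric]) simp
    finally have "2 powr 52 * ulp x = 2 powr -1022" .
    with assms show ?thesis
      by linarith
  qed
  then have "ulp x / 2 \<le> 2 powr -53 * \<bar>fl x\<bar>"
    by (rule half_ulp_le)
  with abs_fl_minus_le[of x] show ?thesis
    by linarith
qed

section \<open>Decimal precision and significant digits\<close>

lemma DP_Ints: "terminating_decimal x \<Longrightarrow> x * 10 ^ DP x \<in> \<int>"
  unfolding terminating_decimal_def DP_def by (rule LeastI_ex)

lemma not_Ints_less_DP: "i < DP x \<Longrightarrow> x * 10 ^ i \<notin> \<int>"
  unfolding DP_def by (rule not_less_Least)

lemma abs_mult_pow_DP_less: "\<bar>x\<bar> * 10 ^ DP x < 10 powr DS x"
proof (cases "x = 0")
  case False
  define L where "L = \<lfloor>log 10 \<bar>x\<bar>\<rfloor>"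
  have "\<bar>x\<bar> < 10 powr (L + 1)"
    using floor_log_eq_powr_iff[of "\<bar>x\<bar>" 10 L] False by (simp add: L_def)
  then have "\<bar>x\<bar> * 10 ^ DP x < 10 powr (L + 1) * 10 powr DP x"
    by (simp add: powr_realpow)
  also have "\<dots> = 10 powr DS x"
    using False by (simp add: DS_def L_def powr_add[symmetric] ac_simps)
  finally show ?thesis .
qed (simp add: DS_def)

lemma DS_pos:
  assumes "terminating_decimal x" and "x \<noteq> 0"
  shows "0 < DS x"
proof -
  have "x * 10 ^ DP x \<noteq> 0"
    using assms(2) by simp
  then have "1 \<le> \<bar>x * 10 ^ DP x\<bar>"
    using DP_Ints[OF assms(1)] by (rule Ints_nonzero_abs_ge1[rotated])
  then have "10 powr 0 < 10 powr DS x"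
    using abs_mult_pow_DP_less[of x] by (simp add: abs_mult)
  then show ?thesis
    by (simp only: powr_less_cancel_iff[of 10])
qed

lemma DS_nonneg: "terminating_decimal x \<Longrightarrow> 0 \<le> DS x"
  using DS_pos[of x] by (cases "x = 0") (auto simp: DS_def)

lemma finite_bounded_decimals:
  assumes "0 < a"
  shows "finite {x. terminating_decimal x \<and> a \<le> \<bar>x\<bar> \<and> \<bar>x\<bar> \<le> b \<and> DS x \<le> n}"
    (is "finite ?D")
proof -
  define N where "N = nat (n - 1 - \<lfloor>log 10 a\<rfloor>)"
  define M where "M = \<lceil>b * 10 ^ N\<rceil>"
  have "?D \<subseteq> (\<lambda>j. of_int j / 10 ^ N) ` {-M..M}"
  proof
    fix x
    assume "x \<in> ?D"
    then have x: "terminating_decimal x" "a \<le> \<bar>x\<bar>" "\<bar>x\<bar> \<le> b" "DS x \<le> n"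
      by auto
    have "x \<noteq> 0"
      using x(2) assms by auto
    have "log 10 a \<le> log 10 \<bar>x\<bar>"
      using x(2) assms by simp
    then have "\<lfloor>log 10 a\<rfloor> \<le> \<lfloor>log 10 \<bar>x\<bar>\<rfloor>"
      by (rule floor_mono)
    then have "DP x \<le> N"
      using x(4) \<open>x \<noteq> 0\<close> by (simp add: DS_def N_def)
    then have "x * 10 ^ N = x * 10 ^ DP x * 10 ^ (N - DP x)"
      by (simp add: power_add[symmetric])
    then have "x * 10 ^ N \<in> \<int>"
      by (metis DP_Ints x(1) Ints_mult Ints_power Ints_numeral)
    then obtain j where j: "x * 10 ^ N = of_int j"
      by (elim Ints_cases)
    have "\<bar>of_int j\<bar> \<le> b * 10 ^ N"
      using x(3) by (simp flip: j add: abs_mult)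
    then have "j \<in> {-M..M}"
      unfolding M_def by (simp add: abs_le_iff) linarith
    moreover have "x = of_int j / 10 ^ N"
      using j by (simp add: field_simps)
    ultimately show "x \<in> (\<lambda>j. of_int j / 10 ^ N) ` {-M..M}"
      by blast
  qed
  then show ?thesis
    by (rule finite_subset) simp
qed

section \<open>Normal doubles and their shortest decimal format\<close>

lemma terminating_decimal_dyadic: "terminating_decimal (of_int m * 2 powr of_int e)"
proof (cases "0 \<le> e")
  case True
  then have "of_int m * 2 powr of_int e * 10 ^ 0 = (of_int (m * 2 ^ nat e) :: real)"
    by (simp add: powr_realpow[symmetric])
  then show ?thesis
    unfolding terminating_decimal_def by (metis Ints_of_int)
next
  case False
  define n where "n = nat (- e)"
  have "2 powr of_int e * 2 ^ n = (1::real)"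
    using False by (simp add: n_def powr_realpow[symmetric] powr_add[symmetric])
  moreover have "(10::real) ^ n = 2 ^ n * 5 ^ n"
    by (simp flip: power_mult_distrib)
  ultimately have "of_int m * 2 powr of_int e * 10 ^ n = (of_int (m * 5 ^ n) :: real)"
    by (simp add: mult.assoc)
  then show ?thesis
    unfolding terminating_decimal_def by (metis Ints_of_int)
qed

lemma is_normal_doubleD:
  assumes "is_normal_double v"
  shows "2 powr -1022 \<le> \<bar>v\<bar>" and "fl v = v" and "terminating_decimal v"
proof -
  obtain m e :: int where v: "v = of_int m * 2 powr e"
    and m: "2 ^ 52 \<le> \<bar>m\<bar>" "\<bar>m\<bar> < 2 ^ 53" and e: "-1074 \<le> e"
    using assms unfolding is_normal_double_def by blast
  have "(2 ^ 52 :: real) \<le> \<bar>of_int m\<bar>"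
    using m(1) by (metis of_int_abs of_int_le_iff of_int_numeral of_int_power)
  have "(2 powr -1022 :: real) = 2 powr 52 * 2 powr -1074"
    by (subst powr_add[symmetric]) simp
  also have "\<dots> \<le> \<bar>of_int m\<bar> * 2 powr e"
    using e \<open>2 ^ 52 \<le> \<bar>of_int m\<bar>\<close> by (intro mult_mono) (simp_all add: powr_realpow)
  also have "\<dots> = \<bar>v\<bar>"
    by (simp add: v abs_mult)
  finally show "2 powr -1022 \<le> \<bar>v\<bar>" .
  show "fl v = v"
    unfolding v using m(2) e by (rule fl_of_int_mult_pow2)
  show "terminating_decimal v"
    unfolding v by (rule terminating_decimal_dyadic)
qed

lemma readback_rel_error:
  assumes "is_normal_double v" and "fl x = v"
  shows "\<bar>x - v\<bar> \<le> 2 powr -53 * \<bar>v\<bar>"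
proof -
  have "\<bar>fl x - x\<bar> \<le> 2 powr -53 * \<bar>fl x\<bar>"
    using is_normal_doubleD(1)[OF assms(1)] assms(2) by (intro fl_rel_error_fl) (simp only:)
  then show ?thesis
    using assms(2) by (simp only: abs_minus_commute)
qed

definition shortest_DS :: "real \<Rightarrow> int" where
  "shortest_DS v = (LEAST n. \<exists>x\<in>readback v. DS x = n \<and> n \<ge> 0)"

lemma shortest_DS_least:
  assumes "x \<in> readback v"
  shows "\<exists>y\<in>readback v. DS y = shortest_DS v" and "shortest_DS v \<le> DS x"
proof -
  have nonneg: "0 \<le> DS y" if "y \<in> readback v" for y
    using that DS_nonneg by (simp add: readback_def)
  define m where "m = (LEAST m::nat. \<exists>y\<in>readback v. DS y = int m)"
  have m: "\<exists>y\<in>readback v. DS y = int m"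
    unfolding m_def by (rule LeastI[of _ "nat (DS x)"]) (use assms nonneg in auto)
  have m_le: "m \<le> nat (DS y)" if "y \<in> readback v" for y
    unfolding m_def by (rule Least_le) (use that nonneg in auto)
  have "shortest_DS v = int m"
    unfolding shortest_DS_def
  proof (rule Least_equality)
    fix n
    assume "\<exists>y\<in>readback v. DS y = n \<and> 0 \<le> n"
    then show "int m \<le> n"
      using m_le by fastforce
  qed (use m in auto)
  then show "\<exists>y\<in>readback v. DS y = shortest_DS v" and "shortest_DS v \<le> DS x"
    using m m_le[OF assms] nonneg[OF assms] by auto
qed

lemma DF_shortest:
  assumes "finite {x \<in> readback v. DS x = shortest_DS v}" and "x \<in> readback v"
  shows "DF v \<in> readback v" and "DS (DF v) = shortest_DS v"
proof -
  define C where "C = {x \<in> readback v. DS x = shortest_DS v}"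
  have "C \<noteq> {}"
    using shortest_DS_least(1)[OF assms(2)] by (auto simp: C_def)
  then obtain x where "is_arg_min (\<lambda>x. \<bar>x - v\<bar>) (\<lambda>x. x \<in> C) x"
    using ex_is_arg_min_if_finite assms(1) unfolding C_def by blast
  then have "\<exists>x. x \<in> C \<and> (\<forall>y\<in>C. \<bar>x - v\<bar> \<le> \<bar>y - v\<bar>)"
    by (auto simp: is_arg_min_def not_less)
  then have "DF v \<in> C"
    unfolding DF_def Let_def shortest_DS_def[symmetric] C_def[symmetric] by (rule someI2_ex) blast
  then show "DF v \<in> readback v" and "DS (DF v) = shortest_DS v"
    by (auto simp: C_def)
qed

lemma DF_zero: "DF 0 = 0"
proof -
  have zero: "0 \<in> readback 0"
    by (simp add: readback_def terminating_decimal_def)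
  have "shortest_DS 0 = 0"
    using shortest_DS_least[OF zero] DS_nonneg by (force simp: DS_def readback_def)
  \<comment> \<open>\<open>readback 0\<close> also contains tiny nonzero decimals, but these have positive \<open>DS\<close>.\<close>
  moreover have "x = 0" if "x \<in> readback 0" and "DS x = 0" for x
    using that DS_pos[of x] by (auto simp: readback_def)
  ultimately have "{x \<in> readback 0. DS x = shortest_DS 0} \<subseteq> {0}"
    by auto
  then have "DF 0 \<in> readback 0" and "DS (DF 0) = 0"
    using DF_shortest[OF _ zero] \<open>shortest_DS 0 = 0\<close> finite_subset by auto
  then show ?thesis
    using DS_pos[of "DF 0"] by (auto simp: readback_def)
qed

lemma DF_normal:
  assumes "is_normal_double v"
  shows "DF v \<in> readback v"
proof (rule DF_shortest(1))
  note v = is_normal_doubleD[OF assms]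
  have "0 < \<bar>v\<bar>"
    using v(1) powr_gt_zero[of 2 "-1022"] by linarith
  have "2 powr -53 * \<bar>v\<bar> \<le> \<bar>v\<bar> / 2"
    by (simp add: powr_neg_numeral)
  then have "\<bar>v\<bar> / 2 \<le> \<bar>x\<bar> \<and> \<bar>x\<bar> \<le> 2 * \<bar>v\<bar>" if "fl x = v" for x
    using readback_rel_error[OF assms that] abs_triangle_ineq2[of x v] abs_triangle_ineq2[of v x]
    by (simp add: abs_minus_commute)
  then have "{x \<in> readback v. DS x = shortest_DS v} \<subseteq>
      {x. terminating_decimal x \<and> \<bar>v\<bar> / 2 \<le> \<bar>x\<bar> \<and> \<bar>x\<bar> \<le> 2 * \<bar>v\<bar> \<and> DS x \<le> shortest_DS v}"
    by (auto simp: readback_def)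
  then show "finite {x \<in> readback v. DS x = shortest_DS v}"
    by (rule finite_subset) (rule finite_bounded_decimals, use \<open>0 < \<bar>v\<bar>\<close> in simp)
  show "v \<in> readback v"
    using v by (simp add: readback_def)
qed

section \<open>Scaling by powers of ten\<close>

lemma fl_pow10:
  assumes "i \<le> 22"
  shows "fl (10 ^ i) = 10 ^ i"
proof -
  have "\<bar>5 ^ i :: int\<bar> < 2 ^ 53"
    using power_increasing[OF assms, of "5::int"] by simp
  moreover have "(10::real) ^ i = of_int (5 ^ i) * 2 powr of_int (int i)"
    by (simp add: powr_realpow flip: power_mult_distrib)
  ultimately show ?thesis
    using fl_of_int_mult_pow2[of "5 ^ i" "int i"] by simp
qed

lemma dmul_pow10_eq: "i \<le> 22 \<Longrightarrow> dmul_pow10 v i = fl (v * 10 ^ i)"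
  by (simp add: dmul_pow10_def fl_pow10)

lemma abs_minus_round_gt_of_perturbed_nonint:
  fixes q y x \<delta> :: real
  assumes "\<And>z. z \<in> \<int> \<Longrightarrow> \<delta> \<le> \<bar>q - z\<bar>" and "\<bar>q\<bar> < 10 ^ 15 * \<delta>"
    and "\<bar>y - q\<bar> \<le> 2 powr -53 * \<bar>y\<bar>" and "\<bar>x - y\<bar> \<le> 2 powr -53 * \<bar>y\<bar>"
  shows "\<bar>x\<bar> * 2 powr -52 < \<bar>x - of_int (round x)\<bar>"
proof -
  have "\<delta> \<le> \<bar>q - of_int (round x)\<bar>"
    using assms(1) by simp
  moreover have "\<bar>q - of_int (round x)\<bar> \<le> \<bar>x - of_int (round x)\<bar> + \<bar>x - y\<bar> + \<bar>y - q\<bar>"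
    by linarith
  moreover have "\<bar>y\<bar> \<le> \<bar>q\<bar> + \<bar>y - q\<bar>" and "\<bar>x\<bar> \<le> \<bar>y\<bar> + \<bar>x - y\<bar>"
    by linarith+
  ultimately show ?thesis
    using assms(2-4) by (simp add: powr_neg_numeral) (use abs_ge_zero[of y] in linarith)
qed

lemma abs_fl_minus_int_le_ulp:
  assumes "k \<in> \<int>" and "\<bar>y\<bar> < 2 powr 53" and "\<bar>y - k\<bar> \<le> 2 powr -53 * \<bar>y\<bar>"
  shows "\<bar>fl y - k\<bar> \<le> ulp y"
proof -
  have u: "0 < ulp y"
    by (rule ulp_pos)
  have "1 / ulp y \<in> \<int>"
    using pow2_div_ulp_Ints[of y 0] assms(2) by simp
  then have "k * (1 / ulp y) \<in> \<int>"
    using assms(1) by (rule Ints_mult[rotated])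
  then have "k / ulp y \<in> \<int>"
    by simp
  then have "(fl y - k) / ulp y \<in> \<int>"
    using fl_div_ulp_Ints[of y] by (simp add: diff_divide_distrib)
  then obtain t where t: "(fl y - k) / ulp y = of_int t"
    by (elim Ints_cases)
  have "2 powr -53 * \<bar>y\<bar> < 2 powr -53 * (2 powr 53 * ulp y)"
    using abs_less_ulp[of y] by simp
  also have "\<dots> = ulp y"
    by (simp add: powr_neg_numeral)
  finally have "\<bar>fl y - k\<bar> < ulp y / 2 + ulp y"
    using abs_fl_minus_le[of y] assms(3) by linarith
  then have "\<bar>of_int t\<bar> < (3/2 :: real)"
    using u by (simp flip: t add: abs_divide field_simps)
  then have "of_int \<bar>t\<bar> < (of_int 2 :: real)"
    by simp
  then have "\<bar>t\<bar> \<le> 1"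
    unfolding of_int_less_iff by simp
  then have "\<bar>of_int t\<bar> \<le> (1 :: real)"
    by (metis of_int_1 of_int_abs of_int_le_iff)
  moreover have "fl y - k = of_int t * ulp y"
    using t u by (simp add: field_simps)
  ultimately show ?thesis
    using u by (simp add: abs_mult mult_left_le_one_le)
qed

lemma inverse_le_dist_Ints:
  fixes q W z :: real
  assumes "q * W \<in> \<int>" and "W \<in> \<int>" and "0 < W" and "q \<notin> \<int>" and "z \<in> \<int>"
  shows "1 / W \<le> \<bar>q - z\<bar>"
proof -
  have "(q - z) * W \<in> \<int>"
    using assms(1,2,5) by (simp add: left_diff_distrib)
  moreover have "(q - z) * W \<noteq> 0"
    using assms(3-5) by (auto simp: right_diff_distrib)
  ultimately have "1 \<le> \<bar>q - z\<bar> * W"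
    using assms(3) by (metis Ints_nonzero_abs_ge1 abs_mult abs_of_pos)
  then show ?thesis
    using assms(3) by (simp add: field_simps)
qed

lemma abs_mult_pow_DP_less_pow: "DS x \<le> int n \<Longrightarrow> \<bar>x\<bar> * 10 ^ DP x < 10 ^ n"
  using abs_mult_pow_DP_less[of x] powr_mono[of "DS x" n 10] by (simp add: powr_realpow)

lemma scaled_readback_rel_error:
  assumes "is_normal_double v" and "fl d = v"
  shows "\<bar>v * s - d * s\<bar> \<le> 2 powr -53 * \<bar>v * s\<bar>"
proof -
  have "\<bar>v - d\<bar> * \<bar>s\<bar> \<le> 2 powr -53 * \<bar>v\<bar> * \<bar>s\<bar>"
    using readback_rel_error[OF assms] by (simp add: abs_minus_commute mult_right_mono)
  then show ?thesis
    by (simp add: abs_mult left_diff_distrib[symmetric] mult.assoc)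
qed

lemma normal_mult_pow10: "is_normal_double v \<Longrightarrow> 2 powr -1022 \<le> \<bar>v * 10 ^ i\<bar>"
  using is_normal_doubleD(1)[of v] mult_mono[of "2 powr -1022" "\<bar>v\<bar>" 1 "10 ^ i"]
  by (simp add: abs_mult)

lemma eps_gt_mu_below_DP:
  assumes v: "is_normal_double v" and d: "fl d = v" "terminating_decimal d" "DS d \<le> 15"
    and i: "i < DP d" "DP d \<le> 22"
  shows "mu_i v i < eps_i v i"
proof -
  define W :: real where "W = 10 ^ (DP d - i)"
  have W: "0 < W" "W \<in> \<int>"
    by (simp_all add: W_def)
  have dW: "d * 10 ^ i * W = d * 10 ^ DP d"
    using i(1) by (simp add: W_def mult.assoc flip: power_add)
  have "\<bar>d * 10 ^ i\<bar> * W = \<bar>d\<bar> * 10 ^ DP d"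
    using W(1) dW by (simp add: abs_mult)
  have "1 / W \<le> \<bar>d * 10 ^ i - z\<bar>" if "z \<in> \<int>" for z
    by (rule inverse_le_dist_Ints)
      (use DP_Ints[OF d(2)] not_Ints_less_DP[OF i(1)] W that in \<open>simp_all add: dW\<close>)
  moreover have "\<bar>d * 10 ^ i\<bar> < 10 ^ 15 * (1 / W)"
    using abs_mult_pow_DP_less_pow[of d 15] d(3) W(1) \<open>\<bar>d * 10 ^ i\<bar> * W = _\<close>
    by (simp add: field_simps)
  moreover have "\<bar>v * 10 ^ i - d * 10 ^ i\<bar> \<le> 2 powr -53 * \<bar>v * 10 ^ i\<bar>"
    using v d(1) by (rule scaled_readback_rel_error)
  moreover have "\<bar>fl (v * 10 ^ i) - v * 10 ^ i\<bar> \<le> 2 powr -53 * \<bar>v * 10 ^ i\<bar>"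
    using normal_mult_pow10[OF v] by (rule fl_rel_error)
  ultimately have "\<bar>fl (v * 10 ^ i)\<bar> * 2 powr -52
      < \<bar>fl (v * 10 ^ i) - of_int (round (fl (v * 10 ^ i)))\<bar>"
    by (rule abs_minus_round_gt_of_perturbed_nonint)
  then show ?thesis
    using i by (simp add: eps_i_def mu_i_def dmul_pow10_eq)
qed

lemma eps_le_mu_at_DP:
  assumes v: "is_normal_double v" and d: "fl d = v" "terminating_decimal d" "DS d \<le> 15"
    and "DP d \<le> 22"
  shows "eps_i v (DP d) \<le> mu_i v (DP d)"
proof -
  define y where "y = v * 10 ^ DP d"
  obtain k where k: "d * 10 ^ DP d = of_int k"
    using DP_Ints[OF d(2)] by (elim Ints_cases)
  have "\<bar>y - of_int k\<bar> \<le> 2 powr -53 * \<bar>y\<bar>"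
    unfolding y_def k[symmetric] using v d(1) by (rule scaled_readback_rel_error)
  moreover have "\<bar>of_int k :: real\<bar> < 10 ^ 15"
    using abs_mult_pow_DP_less_pow[of d 15] d(3) by (simp flip: k add: abs_mult)
  moreover have "\<bar>y\<bar> \<le> \<bar>of_int k\<bar> + \<bar>y - of_int k\<bar>"
    by linarith
  ultimately have "\<bar>y\<bar> < 2 powr 53"
    by (simp add: powr_neg_numeral)
  then have "\<bar>fl y - of_int k\<bar> \<le> ulp y"
    using \<open>\<bar>y - of_int k\<bar> \<le> _\<close> by (intro abs_fl_minus_int_le_ulp) simp_all
  moreover have "2 powr 52 * ulp y \<le> \<bar>fl y\<bar>"
    unfolding y_def using normal_mult_pow10[OF v] by (rule ulp_le_abs_fl)
  moreover have "\<bar>fl y - of_int (round (fl y))\<bar> \<le> \<bar>fl y - of_int k\<bar>"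
    by (rule round_diff_minimal)
  ultimately have "\<bar>fl y - of_int (round (fl y))\<bar> \<le> \<bar>fl y\<bar> * 2 powr -52"
    by (simp add: powr_neg_numeral)
  then show ?thesis
    using assms(5) by (simp add: eps_i_def mu_i_def dmul_pow10_eq y_def)
qed

theorem theorem4:
  fixes v :: real
  assumes "v = 0 \<or> is_normal_double v"
    and "DP (DF v) \<le> 22"
    and "DS (DF v) \<le> 15"
  shows "(\<forall>i < DP (DF v). eps_i v i > mu_i v i) \<and> eps_i v (DP (DF v)) \<le> mu_i v (DP (DF v))"
proof (cases "v = 0")
  case True
  then show ?thesis
    by (simp add: DF_zero DP_def eps_i_def mu_i_def dmul_pow10_def)
next
  case False
  with assms(1) have v: "is_normal_double v"
    by simp
  then have "fl (DF v) = v" and "terminating_decimal (DF v)"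
    using DF_normal by (auto simp: readback_def)
  then show ?thesis
    using eps_gt_mu_below_DP eps_le_mu_at_DP v assms(2,3) by blast
qed

end
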